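(* If $\mathbf{Z}$ has a rotationally invariant distribution supported on the unit sphere, then Assumption (β) holds with $\beta=1$, i.e. $\max_{\mathbf{w}:\theta(\mathbf{w},\mathbf{w}_* )\le\phi}\lambda_{\max}(\mathbf{A}_{\mathbf{w},-\mathbf{w}_*})\le\phi$ for all $0\le\phi\le\pi/2$.
   Context: $\mathbf{Z}\in\mathbb{R}^p$ is a random vector, $\mathbf{w}_*\neq\mathbf{0}$ fixed, $\theta(\mathbf{u},\mathbf{v})\in[0,\pi]$ the angle between vectors, and $\mathbf{A}_{\mathbf{w},-\mathbf{w}_*}=\mathbb{E}[\mathbf{Z}\mathbf{Z}^\top\mathbb{I}\{\mathbf{w}^\top\mathbf{Z}\ge0,\mathbf{w}_*^\top\mathbf{Z}\le0\}]$. Assumption (β) with constant $\beta$: for all $0\le\phi\le\pi/2$, $\max_{\mathbf{w}:\theta(\mathbf{w},\mathbf{w}_* )\le\phi}\lambda_{\max}(\mathbf{A}_{\mathbf{w},-\mathbf{w}_*})\le\beta\phi$. *)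

theory Defs
  imports "HOL-Analysis.Analysis" "HOL-Probability.Probability"
begin

definition vec_angle :: "'a::real_inner \<Rightarrow> 'a \<Rightarrow> real" where
  "vec_angle u v = arccos ((u \<bullet> v) / (norm u * norm v))"

definition real_eigenvalues :: "real^'n^'n \<Rightarrow> real set" where
  "real_eigenvalues A = {c. \<exists>v. v \<noteq> 0 \<and> A *v v = c *\<^sub>R v}"

definition lambda_max :: "real^'n^'n \<Rightarrow> real" where
  "lambda_max A = Max (real_eigenvalues A)"

definition A_mat :: "(real^'n) measure \<Rightarrow> real^'n \<Rightarrow> real^'n \<Rightarrow> real^'n^'n" where
  "A_mat M w ws = (\<chi> i j. \<integral>z. z$i * z$j * (if w \<bullet> z \<ge> 0 \<and> ws \<bullet> z \<le> 0 then 1 else 0) \<partial>M)"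

end

theory Submission
  imports Defs
begin

text \<open>The quadratic form of \<open>A_{w,-w*}\<close> at a unit vector \<open>v\<close> is \<open>E[(v\<^sup>T Z)\<^sup>2 1{Z \<in> W}]\<close> with
  \<open>W = {w\<^sup>T z \<ge> 0, w*\<^sup>T z \<le> 0}\<close>, so every eigenvalue is at most \<open>P(Z \<in> W)\<close> because \<open>\<parallel>Z\<parallel> = 1\<close>.
  The wedge \<open>W\<close> has opening angle \<open>\<theta> = \<theta>(w, w*)\<close>; rotating it in the plane of \<open>w, w*\<close> gives
  \<open>\<lfloor>pi/\<theta>\<rfloor>\<close> copies of equal probability that overlap only on hyperplanes, whence
  \<open>P(Z \<in> W) \<le> 1/\<lfloor>pi/\<theta>\<rfloor> \<le> \<theta>\<close>. That hyperplanes are null follows by descending induction on the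
  dimension of a proper subspace, again by rotating it against itself; it bottoms out at
  \<open>{0}\<close>, which misses the sphere.\<close>

lemma quadratic_nonneg_imp_linear_coeff_zero:
  fixes c K :: real
  assumes "\<And>t. 0 \<le> t * c + t\<^sup>2 * K"
  shows "c = 0"
proof (rule ccontr)
  assume c: "c \<noteq> 0"
  define k where "k = \<bar>K\<bar> + 1"
  have k: "0 < k" unfolding k_def by simp
  define t where "t = - c / k"
  have "t * c + t\<^sup>2 * K \<le> t * c + t\<^sup>2 * (k - 1)" unfolding k_def by (intro add_left_mono mult_left_mono) auto
  also have "\<dots> = - (c / k)\<^sup>2"
    unfolding t_def using k by (simp add: field_simps power2_eq_square)
  also have "\<dots> < 0" using c k by simp
  finally show False using assms[of t] by linarith
qed

lemma cos_sin_combinations_zero: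
  fixes x y s t :: real
  assumes "x * cos s + y * sin s = 0" "x * cos t + y * sin t = 0" "sin (t - s) \<noteq> 0"
  shows "x = 0" "y = 0"
proof -
  have "sin (t - s) * x = sin t * (x * cos s + y * sin s) - sin s * (x * cos t + y * sin t)"
    by (simp add: sin_diff algebra_simps)
  moreover have "sin (t - s) * y = cos s * (x * cos t + y * sin t) - cos t * (x * cos s + y * sin s)"
    by (simp add: sin_diff algebra_simps)
  ultimately have "sin (t - s) * x = 0" "sin (t - s) * y = 0" using assms(1,2) by simp_all
  then show "x = 0" "y = 0" using assms(3) by simp_all
qed

lemma sinusoid_nonneg_between:
  fixes x y s t v :: real
  assumes "s \<le> t" "t \<le> v" "v - s < pi"
    and "0 \<le> x * cos s + y * sin s" "0 \<le> x * cos v + y * sin v"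
  shows "0 \<le> x * cos t + y * sin t"
proof (cases "s = v")
  case True
  then show ?thesis using assms by simp
next
  case False
  have "0 < sin (v - s)" using assms False by (intro sin_gt_zero) auto
  moreover have "0 \<le> sin (v - t)" "0 \<le> sin (t - s)" using assms by (intro sin_ge_zero; simp)+
  moreover have "(x * cos t + y * sin t) * sin (v - s)
      = (x * cos s + y * sin s) * sin (v - t) + (x * cos v + y * sin v) * sin (t - s)"
    by (simp add: sin_diff algebra_simps)
  ultimately show ?thesis using assms(4,5) by (metis add_nonneg_nonneg mult_nonneg_nonneg zero_le_mult_iff not_less)
qed

lemma sinusoid_zero_at_sign_change:
  fixes x y \<theta> :: real and j k :: nat
  assumes "j < k" "0 < \<theta>" "Suc k * \<theta> \<le> pi"
    and "0 \<le> x * cos (Suc j * \<theta>) + y * sin (Suc j * \<theta>)"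
    and "x * cos (k * \<theta>) + y * sin (k * \<theta>) \<le> 0"
    and "0 \<le> x * cos (Suc k * \<theta>) + y * sin (Suc k * \<theta>)"
  shows "x * cos (k * \<theta>) + y * sin (k * \<theta>) = 0"
proof -
  have order: "Suc j * \<theta> \<le> k * \<theta>" "k * \<theta> \<le> Suc k * \<theta>"
    using assms(1,2) by (intro mult_right_mono; simp)+
  moreover have "\<theta> \<le> Suc j * \<theta>" using assms(2) by (simp add: distrib_right)
  ultimately have "Suc k * \<theta> - Suc j * \<theta> < pi" using assms(2,3) by linarith
  then have "0 \<le> x * cos (k * \<theta>) + y * sin (k * \<theta>)"
    using sinusoid_nonneg_between[OF order(1,2)] assms(4,6) by blast
  with assms(5) show ?thesis by linarith
qed

lemma symmetric_matrix_inner: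
  fixes A :: "real^'n^'n"
  assumes "transpose A = A"
  shows "x \<bullet> (A *v y) = (A *v x) \<bullet> y"
  by (metis assms dot_lmul_matrix transpose_matrix_vector)

lemma rayleigh_maximizer_eigenvector:
  fixes A :: "real^'n^'n"
  assumes sym: "transpose A = A"
    and le: "\<And>v. v \<bullet> (A *v v) \<le> l * (v \<bullet> v)"
    and eq: "v0 \<bullet> (A *v v0) = l * (v0 \<bullet> v0)"
  shows "A *v v0 = l *\<^sub>R v0"
proof -
  define r where "r = l *\<^sub>R v0 - A *v v0"
  define q where "q v = l * (v \<bullet> v) - v \<bullet> (A *v v)" for v
  have "q (v0 + t *\<^sub>R r) = t * (2 * (r \<bullet> r)) + t\<^sup>2 * q r" for t
  proof -
    have "v0 \<bullet> (A *v r) = r \<bullet> (A *v v0)"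
      using symmetric_matrix_inner[OF sym, of v0 r] by (simp add: inner_commute)
    then show ?thesis
      using eq unfolding q_def r_def
      by (simp add: inner_add_left inner_add_right inner_diff_left inner_diff_right
          matrix_vector_right_distrib matrix_vector_mult_scaleR matrix_vector_mult_diff_distrib
          inner_commute algebra_simps power2_eq_square)
  qed
  moreover have "0 \<le> q v" for v using le unfolding q_def by simp
  ultimately have "2 * (r \<bullet> r) = 0" by (intro quadratic_nonneg_imp_linear_coeff_zero[where K = "q r"]) metis
  then show ?thesis unfolding r_def by simp
qed

lemma symmetric_matrix_eigenvalue_exists:
  fixes A :: "real^'n^'n"
  assumes sym: "transpose A = A"
  shows "real_eigenvalues A \<noteq> {}"
proof -
  define q where "q v = v \<bullet> (A *v v)" for v :: "real^'n"
  have "continuous_on (sphere 0 1) q"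
    unfolding q_def by (intro continuous_intros linear_continuous_on matrix_vector_mul_bounded_linear)
  moreover have "sphere (0::real^'n) 1 \<noteq> {}"
    by (metis norm_axis_1 mem_sphere_0 empty_iff)
  ultimately obtain v0 where v0: "norm v0 = 1" and max: "\<And>y. norm y = 1 \<Longrightarrow> q y \<le> q v0"
    using continuous_attains_sup[OF compact_sphere] by (metis mem_sphere_0)
  have "v \<bullet> (A *v v) \<le> q v0 * (v \<bullet> v)" for v
  proof (cases "v = 0")
    case False
    have "q v = (norm v)\<^sup>2 * q (v /\<^sub>R norm v)"
      unfolding q_def using False by (simp add: matrix_vector_mult_scaleR power2_eq_square field_simps)
    also have "\<dots> \<le> (norm v)\<^sup>2 * q v0" using False by (intro mult_left_mono max) auto
    finally show ?thesis by (simp add: q_def power2_norm_eq_inner mult.commute)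
  qed simp
  moreover have "v0 \<bullet> (A *v v0) = q v0 * (v0 \<bullet> v0)"
    using v0 by (simp add: q_def power2_norm_eq_inner[symmetric])
  ultimately have "A *v v0 = q v0 *\<^sub>R v0" by (rule rayleigh_maximizer_eigenvector[OF sym])
  moreover have "v0 \<noteq> 0" using v0 by auto
  ultimately show ?thesis unfolding real_eigenvalues_def by blast
qed

lemma symmetric_matrix_eigenvalues_finite:
  fixes A :: "real^'n^'n"
  assumes sym: "transpose A = A"
  shows "finite (real_eigenvalues A)"
proof -
  define E where "E = real_eigenvalues A"
  define vec where "vec c = (SOME v. v \<noteq> 0 \<and> A *v v = c *\<^sub>R v)" for c
  have eigvec: "vec c \<noteq> 0 \<and> A *v vec c = c *\<^sub>R vec c" if "c \<in> E" for c
  proof -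
    have "\<exists>v. v \<noteq> 0 \<and> A *v v = c *\<^sub>R v" using that by (simp add: E_def real_eigenvalues_def)
    then show ?thesis unfolding vec_def by (rule someI_ex)
  qed
  have orth: "vec c \<bullet> vec d = 0" if "c \<in> E" "d \<in> E" "c \<noteq> d" for c d
  proof -
    have "c * (vec c \<bullet> vec d) = (A *v vec c) \<bullet> vec d" using eigvec[OF that(1)] by simp
    also have "\<dots> = vec c \<bullet> (A *v vec d)" using symmetric_matrix_inner[OF sym] by simp
    also have "\<dots> = d * (vec c \<bullet> vec d)" using eigvec[OF that(2)] by simp
    finally show ?thesis using that(3) by simp
  qed
  have "inj_on vec E"
    by (rule inj_onI) (metis eigvec inner_eq_zero_iff orth)
  moreover have "independent (vec ` E)"
    using orth eigvec
    by (intro pairwise_orthogonal_independent) (auto simp: pairwise_def orthogonal_def)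
  then have "finite (vec ` E)" by (rule independent_imp_finite)
  ultimately show ?thesis unfolding E_def by (rule finite_imageD[rotated])
qed

lemma lambda_max_le:
  fixes A :: "real^'n^'n"
  assumes "transpose A = A" and "\<And>c. c \<in> real_eigenvalues A \<Longrightarrow> c \<le> B"
  shows "lambda_max A \<le> B"
  unfolding lambda_max_def
  using assms(2) symmetric_matrix_eigenvalues_finite[OF assms(1)]
    symmetric_matrix_eigenvalue_exists[OF assms(1)] by simp

text \<open>For orthonormal \<open>a\<close>, \<open>b\<close>: rotation by \<open>t\<close> in the plane spanned by \<open>a\<close> and \<open>b\<close>,
  the identity on its orthogonal complement.\<close>

definition plane_rotation :: "'a::real_inner \<Rightarrow> 'a \<Rightarrow> real \<Rightarrow> 'a \<Rightarrow> 'a" where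
  "plane_rotation a b t z = z + ((cos t - 1) * (a \<bullet> z) - sin t * (b \<bullet> z)) *\<^sub>R a
                              + (sin t * (a \<bullet> z) + (cos t - 1) * (b \<bullet> z)) *\<^sub>R b"

lemma linear_plane_rotation: "linear (plane_rotation a b t)"
  unfolding plane_rotation_def
  by (intro linearI) (auto simp: inner_add_right inner_scaleR_right algebra_simps)

lemma inner_plane_rotation:
  assumes "norm a = 1" "norm b = 1" "a \<bullet> b = 0"
  shows "plane_rotation a b t v \<bullet> plane_rotation a b t w = v \<bullet> w"
proof -
  have unit: "a \<bullet> a = 1" "b \<bullet> b = 1" "a \<bullet> b = 0" "b \<bullet> a = 0"
    using assms by (simp_all add: inner_commute power2_norm_eq_inner[symmetric])
  define x y x' y' where "x = a \<bullet> v" "y = b \<bullet> v" "x' = a \<bullet> w" "y' = b \<bullet> w"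
  define co si where "co = cos t" "si = sin t"
  have "plane_rotation a b t v \<bullet> plane_rotation a b t w = v \<bullet> w
     + ((co - 1) * x' - si * y') * x + (si * x' + (co - 1) * y') * y
     + ((co - 1) * x - si * y) * x' + (si * x + (co - 1) * y) * y'
     + ((co - 1) * x - si * y) * ((co - 1) * x' - si * y')
     + (si * x + (co - 1) * y) * (si * x' + (co - 1) * y')"
    unfolding plane_rotation_def co_si_def[symmetric] x_y_x'_y'_def
    by (simp add: unit inner_commute algebra_simps)
  also have "\<dots> = v \<bullet> w + (co * co + si * si - 1) * (x * x' + y * y')"
    by (simp add: algebra_simps)
  also have "co * co + si * si = 1"
    unfolding co_si_def by (metis sin_cos_squared_add3)
  finally show ?thesis by simp
qed

lemma orthogonal_transformation_plane_rotation:
  assumes "norm a = 1" "norm b = 1" "a \<bullet> b = 0"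
  shows "orthogonal_transformation (plane_rotation a b t)"
  using linear_plane_rotation inner_plane_rotation[OF assms]
  unfolding orthogonal_transformation_def by blast

lemma plane_rotation_fixes:
  "a \<bullet> z = 0 \<Longrightarrow> b \<bullet> z = 0 \<Longrightarrow> plane_rotation a b t z = z"
  by (simp add: plane_rotation_def)

lemma inner_plane_rotation_direction:
  assumes "norm a = 1" "norm b = 1" "a \<bullet> b = 0"
  shows "(cos s *\<^sub>R a + sin s *\<^sub>R b) \<bullet> plane_rotation a b (- t) z
       = (cos (s + t) *\<^sub>R a + sin (s + t) *\<^sub>R b) \<bullet> z"
proof -
  have "a \<bullet> a = 1" "b \<bullet> b = 1" "b \<bullet> a = 0"
    using assms by (simp_all add: inner_commute power2_norm_eq_inner[symmetric])
  then show ?thesis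
    using assms(3) by (simp add: plane_rotation_def cos_add sin_add inner_commute algebra_simps)
qed

lemma norm_cos_sin_combination:
  assumes "norm a = 1" "norm b = 1" "a \<bullet> b = 0"
  shows "norm (cos t *\<^sub>R a + sin t *\<^sub>R b) = 1"
proof -
  have "a \<bullet> a = 1" "b \<bullet> b = 1" "b \<bullet> a = 0"
    using assms by (simp_all add: inner_commute power2_norm_eq_inner[symmetric])
  then have "(cos t *\<^sub>R a + sin t *\<^sub>R b) \<bullet> (cos t *\<^sub>R a + sin t *\<^sub>R b) = cos t * cos t + sin t * sin t"
    using assms(3) by (simp add: inner_add_left inner_add_right algebra_simps)
  then show ?thesis by (simp add: norm_eq_sqrt_inner sin_cos_squared_add3)
qed

lemma nat_mult_between_1_and_pi:
  fixes \<theta> :: real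
  assumes "0 < \<theta>" "\<theta> \<le> pi / 2"
  obtains N :: nat where "0 < N" "1 \<le> N * \<theta>" "N * \<theta> \<le> pi"
proof
  define N where "N = nat \<lfloor>pi / \<theta>\<rfloor>"
  have "2 \<le> pi / \<theta>" using assms by (simp add: field_simps)
  then have "pi / \<theta> - 1 < N" "N \<le> pi / \<theta>" unfolding N_def by linarith+
  then have N: "pi - \<theta> < N * \<theta>" "N * \<theta> \<le> pi" using assms(1) by (simp_all add: field_simps)
  then show "1 \<le> N * \<theta>" "N * \<theta> \<le> pi" using assms(2) pi_gt3 by linarith+
  then show "0 < N" by (cases N) auto
qed

lemma (in prob_space) sum_prob_le_1_if_overlaps_within:
  assumes "finite F" "\<And>i. i \<in> F \<Longrightarrow> A i \<in> events" "N \<in> events"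
    and "\<And>i j. i \<in> F \<Longrightarrow> j \<in> F \<Longrightarrow> i \<noteq> j \<Longrightarrow> A i \<inter> A j \<subseteq> N"
  shows "(\<Sum>i\<in>F. prob (A i) - prob N) \<le> 1"
proof -
  have "(\<Sum>i\<in>F. prob (A i) - prob N) \<le> (\<Sum>i\<in>F. prob (A i - N))"
  proof (rule sum_mono)
    fix i assume "i \<in> F"
    then have "prob (A i - N) = prob (A i) - prob (A i \<inter> N)"
      using assms(2,3) by (intro finite_measure_Diff') auto
    moreover have "prob (A i \<inter> N) \<le> prob N" using assms(3) by (intro finite_measure_mono) auto
    ultimately show "prob (A i) - prob N \<le> prob (A i - N)" by simp
  qed
  also have "\<dots> = prob (\<Union>i\<in>F. A i - N)"
    using assms by (intro finite_measure_finite_Union[symmetric]) (auto simp: disjoint_family_on_def)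
  also have "\<dots> \<le> 1" by (rule prob_le_1)
  finally show ?thesis .
qed

lemma (in prob_space) prob_le_if_infinitely_many_overlap_within:
  assumes "infinite I" "\<And>i. i \<in> I \<Longrightarrow> A i \<in> events" "\<And>i. i \<in> I \<Longrightarrow> prob (A i) = p"
    and "N \<in> events" "\<And>i j. i \<in> I \<Longrightarrow> j \<in> I \<Longrightarrow> i \<noteq> j \<Longrightarrow> A i \<inter> A j \<subseteq> N"
  shows "p \<le> prob N"
proof -
  have "real K * (p - prob N) \<le> 1" for K
  proof -
    obtain F where F: "F \<subseteq> I" "finite F" "card F = K"
      using infinite_arbitrarily_large[OF assms(1)] by blast
    then have "(\<Sum>i\<in>F. prob (A i) - prob N) \<le> 1"
      using assms F(1,2) by (intro sum_prob_le_1_if_overlaps_within) blast+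
    then show ?thesis using F assms(3) by (simp add: subset_eq)
  qed
  then have "p - prob N \<le> 0" by (metis ex_less_of_nat_mult not_le)
  then show ?thesis by simp
qed

lemma unit_vector_cos_sin_decomposition:
  fixes a w :: "'a::real_inner"
  assumes a: "norm a = 1" and w: "norm w = 1" and cos: "a \<bullet> w = cos t" and sin: "sin t \<noteq> 0"
  obtains b where "norm b = 1" "a \<bullet> b = 0" "w = cos t *\<^sub>R a + sin t *\<^sub>R b"
proof
  define b where "b = (1 / sin t) *\<^sub>R (w - cos t *\<^sub>R a)"
  have aa: "a \<bullet> a = 1" and ww: "w \<bullet> w = 1"
    using a w by (simp_all add: power2_norm_eq_inner[symmetric])
  show "a \<bullet> b = 0" unfolding b_def using aa cos by (simp add: inner_diff_right)
  have "b \<bullet> b = (1 - (cos t)\<^sup>2) / (sin t)\<^sup>2"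
    unfolding b_def using aa ww cos sin
    by (simp add: inner_diff_left inner_diff_right inner_commute power2_eq_square field_simps)
  then show "norm b = 1" using sin by (simp add: sin_squared_eq[symmetric] norm_eq_sqrt_inner)
  show "w = cos t *\<^sub>R a + sin t *\<^sub>R b" unfolding b_def using sin by simp
qed

lemma closed_wedge: "closed {z. 0 \<le> c \<bullet> z \<and> d \<bullet> z \<le> (0::real)}"
  using closed_Int[OF closed_halfspace_ge closed_halfspace_le] by (simp add: Collect_conj_eq)

locale rotation_invariant_sphere_law =
  fixes M :: "(real^'n) measure"
  assumes prob_space: "prob_space M"
    and sets_M: "sets M = sets borel"
    and on_sphere: "AE z in M. norm z = 1"
    and rotation_invariant: "\<And>f. orthogonal_transformation f \<Longrightarrow> distr M borel f = M"
begin

sublocale prob_space M by (fact prob_space)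

lemma closed_sets_M: "closed A \<Longrightarrow> A \<in> sets M"
  using sets_M by simp

lemma measure_orthogonal_vimage:
  assumes f: "orthogonal_transformation f" and A: "A \<in> sets borel"
  shows "{z. f z \<in> A} \<in> sets M" "measure M {z. f z \<in> A} = measure M A"
proof -
  have "continuous_on UNIV f"
    using f by (intro linear_continuous_on) (simp add: orthogonal_transformation_def linear_conv_bounded_linear)
  then have "f \<in> measurable M borel"
    using borel_measurable_continuous_onI measurable_cong_sets[OF sets_M refl] by blast
  moreover have space: "space M = UNIV" using sets_eq_imp_space_eq[OF sets_M] by simp
  ultimately have vimage: "f -` A \<inter> space M = {z. f z \<in> A}" "f -` A \<inter> space M \<in> sets M"
    using measurable_sets[OF _ A] by blast+
  then show "{z. f z \<in> A} \<in> sets M" by simp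
  have "measure M A = measure (distr M borel f) A" using rotation_invariant[OF f] by simp
  also have "\<dots> = measure M {z. f z \<in> A}"
    using measure_distr[OF \<open>f \<in> measurable M borel\<close> A] vimage by simp
  finally show "measure M {z. f z \<in> A} = measure M A" by simp
qed

lemma measure_origin: "measure M {0} = 0"
  using on_sphere by (subst prob_eq_0) (auto intro: closed_sets_M elim: eventually_mono)

text \<open>Rotating \<open>V\<close> towards \<open>a\<close> gives infinitely many copies of \<open>V\<close>, all of the same measure,
  any two of which meet exactly in the slice; the total mass 1 leaves no room for an excess.\<close>

lemma measure_subspace_eq_measure_slice:
  assumes V: "subspace V"
    and a: "norm a = 1" "\<And>v. v \<in> V \<Longrightarrow> a \<bullet> v = 0"
    and b: "norm b = 1" "b \<in> V"
  shows "measure M V = measure M (V \<inter> {z. b \<bullet> z = 0})"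
proof -
  have ab: "a \<bullet> b = 0" using a b by simp
  define L where "L = V \<inter> {z. b \<bullet> z = 0}"
  define H where "H t = {z. plane_rotation a b (- t) z \<in> V}" for t
  have closed_V: "closed V" by (rule closed_subspace[OF V])
  have H: "H t \<in> sets M" "measure M (H t) = measure M V" for t
    unfolding H_def using measure_orthogonal_vimage orthogonal_transformation_plane_rotation[OF a(1) b(1) ab]
      closed_V by auto
  have L: "L \<in> sets M" unfolding L_def by (intro closed_sets_M closed_Int closed_V closed_hyperplane)
  have "L \<subseteq> H t" for t
    unfolding L_def H_def using a(2) by (auto simp: plane_rotation_fixes)
  then have L_le: "measure M L \<le> measure M V" using H(1,2) by (metis finite_measure_mono)
  have overlap: "H s \<inter> H t \<subseteq> L" if "0 \<le> s" "s < t" "t < pi" for s t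
  proof
    fix z assume z: "z \<in> H s \<inter> H t"
    have rot: "a \<bullet> plane_rotation a b (- r) z = (a \<bullet> z) * cos r + (b \<bullet> z) * sin r" for r
      using inner_plane_rotation_direction[OF a(1) b(1) ab, of 0 r] by (simp add: inner_add_left mult.commute)
    have "plane_rotation a b (- s) z \<in> V" "plane_rotation a b (- t) z \<in> V"
      using z unfolding H_def by auto
    then have "(a \<bullet> z) * cos s + (b \<bullet> z) * sin s = 0" "(a \<bullet> z) * cos t + (b \<bullet> z) * sin t = 0"
      using a(2) rot by metis+
    moreover have "sin (t - s) \<noteq> 0" using that by (intro order.strict_implies_not_eq[symmetric] sin_gt_zero) auto
    ultimately have "a \<bullet> z = 0" "b \<bullet> z = 0" using cos_sin_combinations_zero by blast+
    then show "z \<in> L" using z unfolding H_def L_def by (simp add: plane_rotation_fixes)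
  qed
  have "measure M V \<le> measure M L"
  proof (rule prob_le_if_infinitely_many_overlap_within[where A = H and I = "{0..<pi}"])
    fix s t assume "s \<in> {0..<pi}" "t \<in> {0..<pi}" "s \<noteq> t"
    then show "H s \<inter> H t \<subseteq> L" using overlap[of s t] overlap[of t s] by (cases "s < t") auto
  qed (use H L infinite_Ico[OF pi_gt_zero] in auto)
  with L_le show ?thesis unfolding L_def by simp
qed

lemma measure_proper_subspace:
  assumes "subspace V" "V \<noteq> UNIV"
  shows "measure M V = 0"
  using assms
proof (induction "dim V" arbitrary: V rule: less_induct)
  case less
  show ?case
  proof (cases "V \<subseteq> {0}")
    case True
    then show ?thesis
      using measure_origin finite_measure_mono[of V "{0}"] closed_sets_M measure_nonneg[of M V] by force
  next
    case False
    then obtain b0 where b0: "b0 \<in> V" "b0 \<noteq> 0" by blast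
    define b where "b = b0 /\<^sub>R norm b0"
    have b: "norm b = 1" "b \<in> V" using b0 less.prems(1) by (simp_all add: b_def subspace_scale)
    have "span V = V" using less.prems(1) by (rule span_eq_iff[THEN iffD2])
    then have "dim V \<noteq> DIM(real^'n)" using less.prems(2) dim_eq_full[of V] by argo
    then have "dim V < DIM(real^'n)" using dim_subset_UNIV[of V] by simp
    then obtain a0 :: "real^'n" where a0: "a0 \<noteq> 0" "\<And>v. v \<in> span V \<Longrightarrow> orthogonal a0 v"
      by (metis orthogonal_to_subspace_exists)
    define a where "a = a0 /\<^sub>R norm a0"
    have a: "norm a = 1" "\<And>v. v \<in> V \<Longrightarrow> a \<bullet> v = 0"
      using a0 span_base by (auto simp: a_def orthogonal_def)
    define L where "L = V \<inter> {z. b \<bullet> z = 0}"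
    have "b \<notin> L" using b by (simp add: L_def power2_norm_eq_inner[symmetric])
    moreover have "subspace L"
      unfolding L_def by (intro subspace_inter less.prems(1) subspace_hyperplane)
    ultimately have L: "subspace L" "L \<noteq> UNIV" by auto
    have "L \<subset> V" using b(2) \<open>b \<notin> L\<close> unfolding L_def by blast
    then have "span L \<subset> span V"
      using L(1) \<open>span V = V\<close> by (simp add: span_eq_iff[THEN iffD2])
    then have "dim L < dim V" by (rule dim_psubset)
    then have "measure M L = 0" using less.hyps L by blast
    then show ?thesis
      using measure_subspace_eq_measure_slice[OF less.prems(1) a b] by (simp add: L_def)
  qed
qed

lemma measure_hyperplane:
  assumes "c \<noteq> 0"
  shows "measure M {z. c \<bullet> z = 0} = 0"
proof (rule measure_proper_subspace[OF subspace_hyperplane])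
  have "c \<notin> {z. c \<bullet> z = 0}" using assms by simp
  then show "{z. c \<bullet> z = 0} \<noteq> UNIV" by blast
qed

lemma measure_union_hyperplanes:
  assumes "finite K" "\<And>k. k \<in> K \<Longrightarrow> c k \<noteq> 0"
  shows "measure M (\<Union>k\<in>K. {z. c k \<bullet> z = 0}) = 0"
proof -
  have hyperplanes: "{z. c k \<bullet> z = 0} \<in> sets M" for k
    by (intro closed_sets_M closed_hyperplane)
  have "measure M (\<Union>k\<in>K. {z. c k \<bullet> z = 0}) \<le> (\<Sum>k\<in>K. measure M {z. c k \<bullet> z = 0})"
    using assms(1) hyperplanes by (intro finite_measure_subadditive_finite) auto
  then show ?thesis using assms(2) measure_hyperplane measure_nonneg by (simp add: antisym)
qed

text \<open>About \<open>pi/\<theta>\<close> rotated copies of the wedge fit into a half-turn, and they are disjoint up to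
  the null set of their bounding hyperplanes.\<close>

lemma measure_wedge_le_angle:
  assumes a: "norm a = 1" and b: "norm b = 1" and ab: "a \<bullet> b = 0"
    and \<theta>: "0 < \<theta>" "\<theta> \<le> pi / 2"
  shows "measure M {z. a \<bullet> z \<le> 0 \<and> 0 \<le> (cos \<theta> *\<^sub>R a + sin \<theta> *\<^sub>R b) \<bullet> z} \<le> \<theta>"
proof -
  define u where "u t = cos t *\<^sub>R a + sin t *\<^sub>R b" for t
  have u_inner: "u t \<bullet> z = (a \<bullet> z) * cos t + (b \<bullet> z) * sin t" for t z
    unfolding u_def by (simp add: inner_add_left mult.commute)
  define S where "S j = {z. u (j * \<theta>) \<bullet> z \<le> 0 \<and> 0 \<le> u (Suc j * \<theta>) \<bullet> z}" for j :: nat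
  have S0: "S 0 \<in> sets borel"
    unfolding S_def using closed_wedge[of "u \<theta>" "u 0"] by (simp add: conj_commute)
  have rotate: "{z. plane_rotation a b (- (j * \<theta>)) z \<in> S 0} = S j" for j
    using inner_plane_rotation_direction[OF a b ab, of 0 "j * \<theta>"]
      inner_plane_rotation_direction[OF a b ab, of \<theta> "j * \<theta>"]
    unfolding S_def u_def by (simp add: algebra_simps)
  define m where "m = measure M (S 0)"
  have S: "S j \<in> sets M" "measure M (S j) = m" for j
    using measure_orthogonal_vimage[OF orthogonal_transformation_plane_rotation[OF a b ab, of "- (j * \<theta>)"] S0]
    by (simp_all add: rotate m_def)
  obtain N :: nat where N: "0 < N" "1 \<le> N * \<theta>" "N * \<theta> \<le> pi"
    using nat_mult_between_1_and_pi[OF \<theta>] .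
  define Z where "Z = (\<Union>k\<le>N. {z. u (k * \<theta>) \<bullet> z = 0})"
  have "u t \<noteq> 0" for t using norm_cos_sin_combination[OF a b ab] by (metis u_def norm_zero zero_neq_one)
  then have Z: "Z \<in> sets M" "measure M Z = 0"
    unfolding Z_def by (auto intro!: closed_sets_M closed_hyperplane measure_union_hyperplanes)
  have overlap: "S j \<inter> S k \<subseteq> Z" if "j < k" "k < N" for j k
  proof
    fix z assume z: "z \<in> S j \<inter> S k"
    have "real (Suc k) * \<theta> \<le> N * \<theta>" using that \<theta>(1) by (intro mult_right_mono) auto
    then have arc: "real (Suc k) * \<theta> \<le> pi" using N(3) by linarith
    have "u (k * \<theta>) \<bullet> z = 0"
      using z unfolding S_def u_inner
      by (intro sinusoid_zero_at_sign_change[OF \<open>j < k\<close> \<theta>(1) arc]) auto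
    then show "z \<in> Z" using that unfolding Z_def by fastforce
  qed
  have "(\<Sum>j<N. measure M (S j) - measure M Z) \<le> 1"
    using S(1) Z(1) by (rule sum_prob_le_1_if_overlaps_within[OF finite_lessThan])
      (metis overlap Int_commute linorder_neqE_nat lessThan_iff)
  then have "N * m \<le> N * \<theta>" using N(2) by (simp add: S(2) Z(2))
  then have "m \<le> \<theta>" using N(1) by simp
  then show ?thesis unfolding m_def S_def u_def by simp
qed

lemma measure_wedge_le_vec_angle:
  assumes ws: "ws \<noteq> 0" and w: "w \<noteq> 0" and angle: "vec_angle w ws \<le> pi / 2"
  shows "measure M {z. 0 \<le> w \<bullet> z \<and> ws \<bullet> z \<le> 0} \<le> vec_angle w ws"
proof -
  define a where "a = ws /\<^sub>R norm ws"
  define w' where "w' = w /\<^sub>R norm w"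
  define t where "t = vec_angle w ws"
  have a: "norm a = 1" and w': "norm w' = 1" using ws w by (simp_all add: a_def w'_def)
  have "w' \<bullet> a = (w \<bullet> ws) / (norm w * norm ws)" by (simp add: a_def w'_def field_simps)
  then have t_def': "t = arccos (w' \<bullet> a)" by (simp add: t_def vec_angle_def)
  have "\<bar>w' \<bullet> a\<bar> \<le> 1" using Cauchy_Schwarz_ineq2[of w' a] a w' by simp
  then have cos_t: "cos t = w' \<bullet> a" and "0 \<le> t" unfolding t_def' by (auto intro: cos_arccos arccos_lbound)
  have "{z. 0 \<le> w \<bullet> z \<and> ws \<bullet> z \<le> 0} = {z. a \<bullet> z \<le> 0 \<and> 0 \<le> w' \<bullet> z}"
    using ws w by (auto simp: a_def w'_def divide_inverse zero_le_mult_iff mult_le_0_iff)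
  moreover have "measure M {z. a \<bullet> z \<le> 0 \<and> 0 \<le> w' \<bullet> z} \<le> t"
  proof (cases "t = 0")
    case True
    have "(w' - a) \<bullet> (w' - a) = w' \<bullet> w' - 2 * (w' \<bullet> a) + a \<bullet> a"
      by (simp add: inner_diff_left inner_diff_right inner_commute)
    also have "\<dots> = 0"
      using a w' cos_t True by (simp add: power2_norm_eq_inner[symmetric])
    finally have "w' = a" by simp
    then have "{z. a \<bullet> z \<le> 0 \<and> 0 \<le> w' \<bullet> z} \<subseteq> {z. a \<bullet> z = 0}" by auto
    then have "measure M {z. a \<bullet> z \<le> 0 \<and> 0 \<le> w' \<bullet> z} \<le> measure M {z. a \<bullet> z = 0}"
      by (intro finite_measure_mono closed_sets_M closed_hyperplane)
    moreover have "a \<noteq> 0" using a by auto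
    ultimately show ?thesis using measure_hyperplane True by simp
  next
    case False
    then have "0 < t" "t \<le> pi / 2" using \<open>0 \<le> t\<close> angle by (simp_all add: t_def)
    moreover from this have "sin t \<noteq> 0"
      using pi_gt_zero by (intro order.strict_implies_not_eq[symmetric] sin_gt_zero) linarith+
    then obtain b where "norm b = 1" "a \<bullet> b = 0" "w' = cos t *\<^sub>R a + sin t *\<^sub>R b"
      using unit_vector_cos_sin_decomposition[OF a w'] cos_t by (metis inner_commute)
    ultimately show ?thesis using measure_wedge_le_angle[OF a] by simp
  qed
  ultimately show ?thesis by (simp add: t_def)
qed

end

lemma quadratic_form_A_mat:
  fixes M :: "(real^'n) measure" and w ws v :: "real^'n"
  assumes "prob_space M" and sets_M: "sets M = sets borel" and bounded: "AE z in M. norm z \<le> 1"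
  defines "S \<equiv> {z. 0 \<le> w \<bullet> z \<and> ws \<bullet> z \<le> 0}"
  shows "v \<bullet> (A_mat M w ws *v v) = (\<integral>z. (v \<bullet> z)\<^sup>2 * indicator S z \<partial>M)"
proof -
  interpret prob_space M by fact
  define f where "f i j z = z$i * z$j * indicator S z" for i j z
  have "S \<in> sets M" unfolding S_def sets_M using closed_wedge by simp
  moreover have "(\<lambda>z. z$i) \<in> borel_measurable M" for i
    unfolding measurable_cong_sets[OF sets_M refl]
    by (intro borel_measurable_continuous_onI continuous_on_component continuous_on_id)
  ultimately have "f i j \<in> borel_measurable M" for i j
    unfolding f_def by measurable
  moreover have "AE z in M. norm (f i j z) \<le> 1" for i j
    using bounded
  proof (rule eventually_mono)
    fix z :: "real^'n" assume "norm z \<le> 1"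
    then have "\<bar>z$i\<bar> \<le> 1" "\<bar>z$j\<bar> \<le> 1" using component_le_norm_cart[of z] by (metis order.trans)+
    then show "norm (f i j z) \<le> 1"
      unfolding f_def by (simp add: abs_mult indicator_def mult_le_one)
  qed
  ultimately have f_integrable: "integrable M (f i j)" for i j
    by (intro integrable_const_bound)
  have "A_mat M w ws = (\<chi> i j. integral\<^sup>L M (f i j))"
    unfolding A_mat_def f_def S_def by (simp add: indicator_def of_bool_def)
  then have "v \<bullet> (A_mat M w ws *v v) = (\<Sum>i\<in>UNIV. \<Sum>j\<in>UNIV. \<integral>z. v$i * v$j * f i j z \<partial>M)"
    by (simp add: inner_vec_def matrix_vector_mult_def sum_distrib_left mult_ac)
  also have "\<dots> = (\<integral>z. (\<Sum>i\<in>UNIV. \<Sum>j\<in>UNIV. v$i * v$j * f i j z) \<partial>M)"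
    using f_integrable by (simp add: Bochner_Integration.integral_sum)
  also have "\<dots> = (\<integral>z. (v \<bullet> z)\<^sup>2 * indicator S z \<partial>M)"
  proof (rule Bochner_Integration.integral_cong[OF refl])
    fix z
    have "(v \<bullet> z)\<^sup>2 = (\<Sum>i\<in>UNIV. \<Sum>j\<in>UNIV. (v$i * z$i) * (v$j * z$j))"
      by (simp add: inner_vec_def power2_eq_square sum_product)
    then show "(\<Sum>i\<in>UNIV. \<Sum>j\<in>UNIV. v$i * v$j * f i j z) = (v \<bullet> z)\<^sup>2 * indicator S z"
      by (simp add: f_def sum_distrib_left mult_ac)
  qed
  finally show ?thesis .
qed

lemma eigenvalue_A_mat_le_measure:
  fixes M :: "(real^'n) measure"
  assumes M: "prob_space M" "sets M = sets borel" "AE z in M. norm z \<le> 1"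
    and v: "v \<noteq> 0" "A_mat M w ws *v v = c *\<^sub>R v"
  shows "c \<le> measure M {z. 0 \<le> w \<bullet> z \<and> ws \<bullet> z \<le> 0}"
proof -
  interpret prob_space M by fact
  define S where "S = {z. 0 \<le> w \<bullet> z \<and> ws \<bullet> z \<le> 0}"
  have "S \<in> sets M" unfolding S_def M(2) using closed_wedge by simp
  have "c * (v \<bullet> v) = (\<integral>z. (v \<bullet> z)\<^sup>2 * indicator S z \<partial>M)"
    using quadratic_form_A_mat[OF M, where w = w and ws = ws and v = v] v(2) unfolding S_def by simp
  also have "\<dots> \<le> (\<integral>z. (v \<bullet> v) * indicator S z \<partial>M)"
  proof (rule integral_mono_AE)
    have bound: "AE z in M. (v \<bullet> z)\<^sup>2 \<le> v \<bullet> v"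
      using M(3)
    proof (rule eventually_mono)
      fix z :: "real^'n" assume "norm z \<le> 1"
      then have "z \<bullet> z \<le> 1" by (simp add: power2_norm_eq_inner[symmetric] power_le_one)
      then have "(v \<bullet> v) * (z \<bullet> z) \<le> v \<bullet> v" by (intro mult_left_le) auto
      with Cauchy_Schwarz_ineq[of v z] show "(v \<bullet> z)\<^sup>2 \<le> v \<bullet> v" by linarith
    qed
    then show "AE z in M. (v \<bullet> z)\<^sup>2 * indicator S z \<le> (v \<bullet> v) * indicator S z"
      by (auto simp: indicator_def)
    have "(\<lambda>z. (v \<bullet> z)\<^sup>2) \<in> borel_measurable M"
      unfolding measurable_cong_sets[OF M(2) refl]
      by (intro borel_measurable_continuous_onI continuous_intros)
    then have "(\<lambda>z. (v \<bullet> z)\<^sup>2 * indicator S z) \<in> borel_measurable M"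
      using \<open>S \<in> sets M\<close> by measurable
    then show "integrable M (\<lambda>z. (v \<bullet> z)\<^sup>2 * indicator S z)"
      using bound by (intro integrable_const_bound[where B = "v \<bullet> v"]) (auto simp: indicator_def)
    show "integrable M (\<lambda>z. (v \<bullet> v) * indicator S z)"
      using \<open>S \<in> sets M\<close> by (intro integrable_mult_right integrable_real_indicator) (auto simp: less_top[symmetric])
  qed
  also have "\<dots> = (v \<bullet> v) * measure M S" using \<open>S \<in> sets M\<close> by simp
  finally show ?thesis using v(1) unfolding S_def by (simp add: mult.commute)
qed

lemma transpose_A_mat: "transpose (A_mat M w ws) = A_mat M w ws"
  by (simp add: transpose_def A_mat_def mult.commute)

theorem theorem7:
  fixes M :: "(real^'n) measure" and ws :: "real^'n" and \<phi> :: real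
  assumes "prob_space M"
    and "sets M = sets borel"
    and "AE z in M. norm z = 1"
    and "\<And>f. orthogonal_transformation f \<Longrightarrow> distr M borel f = M"
    and "ws \<noteq> 0"
    and "0 \<le> \<phi>" and "\<phi> \<le> pi / 2"
  shows "\<forall>w. w \<noteq> 0 \<and> vec_angle w ws \<le> \<phi> \<longrightarrow> lambda_max (A_mat M w ws) \<le> \<phi>"
proof (intro allI impI)
  interpret rotation_invariant_sphere_law M
    using assms(1-4) by (rule rotation_invariant_sphere_law.intro)
  fix w :: "real^'n" assume w: "w \<noteq> 0 \<and> vec_angle w ws \<le> \<phi>"
  have "AE z in M. norm z \<le> 1" using assms(3) by eventually_elim simp
  show "lambda_max (A_mat M w ws) \<le> \<phi>"
  proof (rule lambda_max_le[OF transpose_A_mat])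
    fix c assume "c \<in> real_eigenvalues (A_mat M w ws)"
    then obtain v where "v \<noteq> 0" "A_mat M w ws *v v = c *\<^sub>R v"
      unfolding real_eigenvalues_def by blast
    then have "c \<le> measure M {z. 0 \<le> w \<bullet> z \<and> ws \<bullet> z \<le> 0}"
      using eigenvalue_A_mat_le_measure assms(1,2) \<open>AE z in M. norm z \<le> 1\<close> by blast
    also have "\<dots> \<le> vec_angle w ws"
      using measure_wedge_le_vec_angle assms(5,7) w by force
    finally show "c \<le> \<phi>" using w by linarith
  qed
qed

end
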